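(* Let $L$ be a Lelek fan with top $v$, let $W$ be a wedge in $L$, and let $L'\subseteq L$ be a subcontinuum that is a Lelek fan such that 1. $L'\cap W$ is a Lelek fan, and 2. there is a Cantor fan $C$ with $L'\cap W\subseteq C\subseteq W$. Then there is no retraction from $L$ onto $L'$.
   Context: A continuum is a nonempty compact connected metric space. A dendroid is an arcwise connected, hereditarily unicoherent continuum. A point $x$ of a dendroid $X$ is a ramification point if $x$ is the top (the branch point) of some simple triod in $X$. A fan is a dendroid with at most one ramification point; this point, if it exists, is called the top of the fan. For a fan $X$, a point $x$ is an end point of $X$ if $x$ is an end point of every arc in $X$ containing $x$; $E(X)$ denotes the set of end points of $X$. A fan $X$ with top $v$ is smooth if for every $x\in X$ and every sequence $x_n\to x$ in $X$, the arcs from $v$ to $x_n$ converge (in the Hausdorff metric) to the arc from $v$ to $x$. A Lelek fan is a smooth fan $X$ with $\mathrm{Cl}(E(X))=X$. A Cantor fan is a continuum homeomorphic to $\bigcup_{c\in C}A_c\subseteq\mathbb R^2$, where $C\subseteq[0,1]$ is the Cantor middle-third set and $A_c$ is the straight segment from $(\tfrac12,0)$ to $(c,1)$. If $L$ is a Lelek fan with top $v$, a subcontinuum $W\subseteq L$ is a wedge in $L$ if both $W$ and $(L\setminus W)\cup\{v\}$ are Lelek fans. A retraction from a space $X$ onto a subspace $Y$ is a continuous map $r:X\to Y$ with $r(y)=y$ for all $y\in Y$. *)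

theory Defs
  imports "HOL-Analysis.Analysis"
begin

definition continuum :: "'a::metric_space set \<Rightarrow> bool" where
  "continuum X \<longleftrightarrow> X \<noteq> {} \<and> compact X \<and> connected X"

definition arc_from_to :: "'a::metric_space set \<Rightarrow> 'a \<Rightarrow> 'a \<Rightarrow> bool" where
  "arc_from_to A a b \<longleftrightarrow>
     (\<exists>g. arc g \<and> path_image g = A \<and> pathstart g = a \<and> pathfinish g = b)"

definition is_arc :: "'a::metric_space set \<Rightarrow> bool" where
  "is_arc A \<longleftrightarrow> (\<exists>a b. arc_from_to A a b)"

definition arc_endpoint :: "'a::metric_space set \<Rightarrow> 'a \<Rightarrow> bool" where
  "arc_endpoint A x \<longleftrightarrow> (\<exists>b. arc_from_to A x b)"

definition arcwise_connected :: "'a::metric_space set \<Rightarrow> bool" where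
  "arcwise_connected X \<longleftrightarrow>
     (\<forall>a\<in>X. \<forall>b\<in>X. a \<noteq> b \<longrightarrow> (\<exists>A. A \<subseteq> X \<and> arc_from_to A a b))"

definition hereditarily_unicoherent :: "'a::metric_space set \<Rightarrow> bool" where
  "hereditarily_unicoherent X \<longleftrightarrow>
     (\<forall>A B. A \<subseteq> X \<and> B \<subseteq> X \<and> continuum A \<and> continuum B \<longrightarrow> connected (A \<inter> B))"

definition dendroid :: "'a::metric_space set \<Rightarrow> bool" where
  "dendroid X \<longleftrightarrow> continuum X \<and> arcwise_connected X \<and> hereditarily_unicoherent X"

definition ramification_point :: "'a::metric_space set \<Rightarrow> 'a \<Rightarrow> bool" where
  "ramification_point X x \<longleftrightarrow>
     (\<exists>A1 A2 A3. A1 \<subseteq> X \<and> A2 \<subseteq> X \<and> A3 \<subseteq> X \<and>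
        arc_endpoint A1 x \<and> arc_endpoint A2 x \<and> arc_endpoint A3 x \<and>
        A1 \<inter> A2 = {x} \<and> A1 \<inter> A3 = {x} \<and> A2 \<inter> A3 = {x})"

definition fan_with_top :: "'a::metric_space set \<Rightarrow> 'a \<Rightarrow> bool" where
  "fan_with_top X v \<longleftrightarrow> dendroid X \<and> ramification_point X v \<and>
     (\<forall>x. ramification_point X x \<longrightarrow> x = v)"

definition end_points :: "'a::metric_space set \<Rightarrow> 'a set" where
  "end_points X = {x \<in> X. \<forall>A. A \<subseteq> X \<and> is_arc A \<and> x \<in> A \<longrightarrow> arc_endpoint A x}"

text \<open>The (unique, in a dendroid) arc in X from v to x; degenerate {v} for x = v.\<close>
definition arc_in :: "'a::metric_space set \<Rightarrow> 'a \<Rightarrow> 'a \<Rightarrow> 'a set" where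
  "arc_in X v x = (if x = v then {v} else (THE A. A \<subseteq> X \<and> arc_from_to A v x))"

definition hausdorff_dist :: "'a::metric_space set \<Rightarrow> 'a set \<Rightarrow> real" where
  "hausdorff_dist A B = max (SUP a\<in>A. infdist a B) (SUP b\<in>B. infdist b A)"

definition smooth_fan_with_top :: "'a::metric_space set \<Rightarrow> 'a \<Rightarrow> bool" where
  "smooth_fan_with_top X v \<longleftrightarrow> fan_with_top X v \<and>
     (\<forall>x\<in>X. \<forall>s::nat \<Rightarrow> 'a. (\<forall>n. s n \<in> X) \<and> s \<longlonglongrightarrow> x \<longrightarrow>
        (\<lambda>n. hausdorff_dist (arc_in X v (s n)) (arc_in X v x)) \<longlonglongrightarrow> 0)"

definition lelek_fan_with_top :: "'a::metric_space set \<Rightarrow> 'a \<Rightarrow> bool" where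
  "lelek_fan_with_top X v \<longleftrightarrow> smooth_fan_with_top X v \<and> closure (end_points X) = X"

definition lelek_fan :: "'a::metric_space set \<Rightarrow> bool" where
  "lelek_fan X \<longleftrightarrow> (\<exists>v. lelek_fan_with_top X v)"

definition wedge :: "'a::metric_space set \<Rightarrow> 'a \<Rightarrow> 'a set \<Rightarrow> bool" where
  "wedge L v W \<longleftrightarrow> W \<subseteq> L \<and> continuum W \<and> lelek_fan W \<and> lelek_fan ((L - W) \<union> {v})"

definition cantor_set :: "real set" where
  "cantor_set = {x. \<exists>d::nat \<Rightarrow> nat. (\<forall>n. d n \<in> {0, 2}) \<and>
                      (\<lambda>n. real (d n) / 3 ^ (Suc n)) sums x}"

definition cantor_fan_model :: "(real \<times> real) set" where
  "cantor_fan_model = (\<Union>c\<in>cantor_set. closed_segment (1/2, 0) (c, 1))"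

definition cantor_fan :: "'a::metric_space set \<Rightarrow> bool" where
  "cantor_fan C \<longleftrightarrow> C homeomorphic cantor_fan_model"

end

theory Submission
  imports Defs
begin

text \<open>
  Suppose r retracts L onto L'. The pieces L' \<inter> W and L' \<inter> ((L - W) \<union> {v}) are closed and
  meet at most in v, so collapsing the second one to a point of K = L' \<inter> W turns r into a
  retraction of L, and hence of the Cantor fan C, onto the Lelek fan K.

  That is impossible, as one sees after moving K into the standard Cantor fan model, whose
  blades are parametrised by height. Since the Cantor set is totally disconnected, every
  connected set avoiding the top lies in one blade; as K has a ramification point, K contains
  the top and hence, by arcwise connectedness, every blade segment below a point of K. So an end
  point e of K is the highest point of K on its blade. Take a segment of K on some blade and end
  points e of K converging to its midpoint. By continuity the retraction maps the point above e
  at three quarters of the segment's height close to the corresponding point of the segment, so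
  higher than e; the image of the blade piece between them is connected, contains e, and cannot
  stay in the blade of e, so it passes through the top. Letting e converge, the closed fibre of
  the top meets the segment, on which the retraction is the identity.
\<close>

section \<open>The Cantor set\<close>

lemma cantor_digit_sum_bounds:
  assumes "\<forall>n. d n \<in> {0::nat, 2}" and "(\<lambda>n. real (d n) / 3 ^ Suc n) sums x"
  shows "0 \<le> x \<and> x \<le> 1"
proof -
  have "(\<lambda>n. (2/3) * (1/3::real) ^ n) sums ((2/3) * (1 / (1 - 1/3)))"
    by (intro sums_mult geometric_sums) simp
  then have max_sum: "(\<lambda>n. 2 / 3 ^ Suc n) sums (1::real)"
    by (simp add: power_one_over)
  have "0 \<le> x"
    by (rule sums_le[OF _ sums_zero assms(2)]) simp
  moreover have "x \<le> 1"
  proof (rule sums_le[OF _ assms(2) max_sum])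
    fix n
    have "d n \<le> 2" using assms(1) by (metis empty_iff insert_iff order_refl zero_le)
    then show "real (d n) / 3 ^ Suc n \<le> 2 / 3 ^ Suc n"
      by (intro divide_right_mono) auto
  qed
  ultimately show ?thesis ..
qed

lemma cantor_set_subset: "cantor_set \<subseteq> {0..1}"
proof
  fix x assume "x \<in> cantor_set"
  then obtain d where "\<forall>n. d n \<in> {0::nat, 2}" "(\<lambda>n. real (d n) / 3 ^ Suc n) sums x"
    unfolding cantor_set_def by blast
  then show "x \<in> {0..1}" using cantor_digit_sum_bounds by simp
qed

lemma cantor_set_cases:
  assumes "x \<in> cantor_set"
  shows "(x \<le> 1/3 \<and> 3 * x \<in> cantor_set) \<or> (2/3 \<le> x \<and> 3 * x - 2 \<in> cantor_set)"
proof -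
  obtain d where d: "\<forall>n. d n \<in> {0::nat, 2}" "(\<lambda>n. real (d n) / 3 ^ Suc n) sums x"
    using assms unfolding cantor_set_def by auto
  have "(\<lambda>n. real (d n) / 3 ^ Suc n) sums (x - real (d 0) / 3 + real (d 0) / 3 ^ Suc 0)"
    using d(2) by simp
  then have "(\<lambda>n. real (d (Suc n)) / 3 ^ Suc (Suc n)) sums (x - real (d 0) / 3)"
    by (rule iffD2[OF sums_Suc_iff])
  then have "(\<lambda>n. 3 * (real (d (Suc n)) / 3 ^ Suc (Suc n))) sums (3 * (x - real (d 0) / 3))"
    by (rule sums_mult)
  moreover have "(\<lambda>n. 3 * (real (d (Suc n)) / 3 ^ Suc (Suc n))) = (\<lambda>n. real (d (Suc n)) / 3 ^ Suc n)"
    by (rule ext) (simp add: field_simps)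
  moreover have "3 * (x - real (d 0) / 3) = 3 * x - real (d 0)"
    by simp
  ultimately have shifted: "(\<lambda>n. real (d (Suc n)) / 3 ^ Suc n) sums (3 * x - real (d 0))"
    by metis
  have shifted_digits: "\<forall>n. d (Suc n) \<in> {0::nat, 2}"
    using d(1) by auto
  have mem: "3 * x - real (d 0) \<in> cantor_set"
    unfolding cantor_set_def using shifted_digits shifted
    by (intro CollectI exI[of _ "\<lambda>n. d (Suc n)"] conjI)
  have bounds: "0 \<le> 3 * x - real (d 0) \<and> 3 * x - real (d 0) \<le> 1"
    by (rule cantor_digit_sum_bounds[OF shifted_digits shifted])
  have "d 0 = 0 \<or> d 0 = 2"
    using d(1) by blast
  then show ?thesis
    using mem bounds by auto
qed

lemma cantor_set_interval_length:
  "a < b \<Longrightarrow> {a..b} \<subseteq> cantor_set \<Longrightarrow> 3 ^ n * (b - a) \<le> (1::real)"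
proof (induction n arbitrary: a b)
  case 0
  then have "{a..b} \<subseteq> {0..1}" using cantor_set_subset by blast
  then show ?case using 0 by simp
next
  case (Suc n)
  consider "b \<le> 1/3" | "2/3 \<le> a" | "a < 2/3" "1/3 < b" by linarith
  then show ?case
  proof cases
    case 1
    have "{3*a..3*b} \<subseteq> cantor_set"
    proof
      fix y assume "y \<in> {3*a..3*b}"
      then have "y/3 \<in> cantor_set" "y/3 \<le> 1/3" using Suc.prems 1 by auto
      then show "y \<in> cantor_set" using cantor_set_cases[of "y/3"] by auto
    qed
    then show ?thesis using Suc.IH[of "3*a" "3*b"] Suc.prems by (simp add: algebra_simps)
  next
    case 2
    have "{3*a-2..3*b-2} \<subseteq> cantor_set"
    proof
      fix y assume "y \<in> {3*a-2..3*b-2}"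
      then have "(y+2)/3 \<in> cantor_set" "2/3 \<le> (y+2)/3" using Suc.prems 2 by auto
      moreover have "3 * ((y+2)/3) - 2 = y" by (simp add: field_simps)
      ultimately show "y \<in> cantor_set" using cantor_set_cases[of "(y+2)/3"] by auto
    qed
    then show ?thesis using Suc.IH[of "3*a-2" "3*b-2"] Suc.prems by (simp add: algebra_simps)
  next
    case 3
    \<comment> \<open>then [a, b] meets the removed middle third\<close>
    define w where "w = (max a (1/3) + min b (2/3)) / 2"
    have "w \<in> {a..b}" "1/3 < w" "w < 2/3" using 3 Suc.prems unfolding w_def by auto
    then show ?thesis using cantor_set_cases[of w] Suc.prems by auto
  qed
qed

lemma connected_subset_cantor_set:
  assumes "connected T" "T \<subseteq> cantor_set" "a \<in> T" "b \<in> T"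
  shows "a = b"
proof (rule ccontr)
  assume "a \<noteq> b"
  then obtain a' b' where ab: "a' < b'" "a' \<in> T" "b' \<in> T"
    using assms by (metis linorder_neqE_linordered_idom)
  have "{a'..b'} \<subseteq> cantor_set"
    using connected_contains_Icc[OF assms(1) ab(2,3)] assms(2) by auto
  moreover obtain n where "1 / (b' - a') < 3 ^ n"
    using real_arch_pow[of 3 "1 / (b' - a')"] by auto
  then have "1 < 3 ^ n * (b' - a')" using ab(1) by (simp add: field_simps)
  ultimately show False using cantor_set_interval_length[OF ab(1)] by (meson not_le)
qed

section \<open>Coordinates on the Cantor fan model\<close>

text \<open>The Cantor fan model is the union of the segments from fan_top to (c, 1), c in the
  Cantor set; fan_point c y is the point of height y on that segment, and fan_blade recovers c
  from any point other than fan_top (where it returns the junk value 1/2).\<close>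

definition fan_top :: "real \<times> real" where
  "fan_top = (1/2, 0)"

definition fan_point :: "real \<Rightarrow> real \<Rightarrow> real \<times> real" where
  "fan_point c y = (1/2 + y * (c - 1/2), y)"

definition fan_blade :: "real \<times> real \<Rightarrow> real" where
  "fan_blade a = 1/2 + (fst a - 1/2) / snd a"

lemma snd_fan_point [simp]: "snd (fan_point c y) = y"
  by (simp add: fan_point_def)

lemma snd_fan_top [simp]: "snd fan_top = 0"
  by (simp add: fan_top_def)

lemma fan_point_0 [simp]: "fan_point c 0 = fan_top"
  by (simp add: fan_point_def fan_top_def)

lemma fan_point_eq_top_iff [simp]: "fan_point c y = fan_top \<longleftrightarrow> y = 0"
  by (auto simp: fan_point_def fan_top_def)

lemma fan_blade_fan_point [simp]: "y \<noteq> 0 \<Longrightarrow> fan_blade (fan_point c y) = c"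
  by (simp add: fan_point_def fan_blade_def)

lemma dist_fan_point: "dist (fan_point c y) (fan_point c' y) = \<bar>y\<bar> * \<bar>c - c'\<bar>"
  by (simp add: fan_point_def dist_Pair_Pair dist_real_def abs_mult flip: right_diff_distrib)

lemma continuous_on_fan_point [continuous_intros]:
  "continuous_on S f \<Longrightarrow> continuous_on S g \<Longrightarrow> continuous_on S (\<lambda>x. fan_point (f x) (g x))"
  unfolding fan_point_def by (intro continuous_intros)

lemma tendsto_fan_point [tendsto_intros]:
  "(f \<longlongrightarrow> c) F \<Longrightarrow> (g \<longlongrightarrow> y) F \<Longrightarrow> ((\<lambda>x. fan_point (f x) (g x)) \<longlongrightarrow> fan_point c y) F"
  unfolding fan_point_def by (intro tendsto_intros)

lemma tendsto_fan_blade: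
  "(f \<longlongrightarrow> a) F \<Longrightarrow> snd a \<noteq> 0 \<Longrightarrow> ((\<lambda>x. fan_blade (f x)) \<longlongrightarrow> fan_blade a) F"
  unfolding fan_blade_def by (intro tendsto_intros) auto

lemma mem_cantor_fan_model:
  "a \<in> cantor_fan_model \<longleftrightarrow> (\<exists>c\<in>cantor_set. \<exists>y\<in>{0..1}. a = fan_point c y)"
proof -
  have "a \<in> closed_segment (1/2, 0) (c, 1) \<longleftrightarrow> (\<exists>y\<in>{0..1}. a = fan_point c y)" for c
    unfolding closed_segment_def fan_point_def by (auto simp: field_simps)
  then show ?thesis unfolding cantor_fan_model_def by blast
qed

lemma fan_point_in_cantor_fan_model:
  "c \<in> cantor_set \<Longrightarrow> 0 \<le> y \<Longrightarrow> y \<le> 1 \<Longrightarrow> fan_point c y \<in> cantor_fan_model"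
  by (metis atLeastAtMost_iff mem_cantor_fan_model)

lemma cantor_fan_model_height: "a \<in> cantor_fan_model \<Longrightarrow> 0 \<le> snd a \<and> snd a \<le> 1"
  unfolding mem_cantor_fan_model by auto

lemma cantor_fan_model_non_top:
  assumes "a \<in> cantor_fan_model" "a \<noteq> fan_top"
  shows "0 < snd a \<and> fan_blade a \<in> cantor_set \<and> a = fan_point (fan_blade a) (snd a)"
  using assms unfolding mem_cantor_fan_model by force

lemma connected_cantor_fan_model_same_blade:
  assumes "connected S" "S \<subseteq> cantor_fan_model" "fan_top \<notin> S" "a \<in> S" "b \<in> S"
  shows "fan_blade a = fan_blade b"
proof -
  have "continuous_on S fan_blade"
    unfolding fan_blade_def using assms(2,3) cantor_fan_model_non_top
    by (intro continuous_intros) force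
  then have "connected (fan_blade ` S)" using assms(1) connected_continuous_image by blast
  moreover have "fan_blade ` S \<subseteq> cantor_set" using assms(2,3) cantor_fan_model_non_top by blast
  ultimately show ?thesis using connected_subset_cantor_set assms(4,5) by blast
qed

lemma closed_segment_fan_top:
  assumes "0 < h"
  shows "closed_segment fan_top (fan_point c h) = fan_point c ` {0..h}"
proof
  show "closed_segment fan_top (fan_point c h) \<subseteq> fan_point c ` {0..h}"
  proof
    fix a assume "a \<in> closed_segment fan_top (fan_point c h)"
    then obtain u where u: "0 \<le> u" "u \<le> 1" "a = (1 - u) *\<^sub>R fan_top + u *\<^sub>R fan_point c h"
      unfolding closed_segment_def by auto
    then have "a = fan_point c (u * h)"
      by (simp add: fan_point_def fan_top_def field_simps)
    moreover have "u * h \<in> {0..h}"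
      using u assms by (auto simp: mult_le_cancel_right1)
    ultimately show "a \<in> fan_point c ` {0..h}" by blast
  qed
next
  show "fan_point c ` {0..h} \<subseteq> closed_segment fan_top (fan_point c h)"
  proof
    fix a assume "a \<in> fan_point c ` {0..h}"
    then obtain y where y: "0 \<le> y" "y \<le> h" "a = fan_point c y" by auto
    then have "a = (1 - y/h) *\<^sub>R fan_top + (y/h) *\<^sub>R fan_point c h"
      using assms by (simp add: fan_point_def fan_top_def field_simps)
    moreover have "0 \<le> y/h" "y/h \<le> 1" using y assms by auto
    ultimately show "a \<in> closed_segment fan_top (fan_point c h)"
      unfolding closed_segment_def by blast
  qed
qed

lemma arc_from_fan_top_covers_segment:
  assumes "arc g" "path_image g \<subseteq> cantor_fan_model"
    and "pathstart g = fan_top" "pathfinish g = q" "0 \<le> y" "y \<le> snd q"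
  shows "fan_point (fan_blade q) y \<in> path_image g"
proof (cases "y = 0")
  case True
  then show ?thesis using assms(3) pathstart_in_path_image[of g] by simp
next
  case False
  have cont: "continuous_on {0..1} g" using arc_imp_path[OF assms(1)] unfolding path_def .
  have "continuous_on {0..1} (\<lambda>s. snd (g s))" by (intro continuous_intros cont)
  moreover have "snd (g 0) \<le> y" "y \<le> snd (g 1)"
    using assms(3-6) by (auto simp: pathstart_def pathfinish_def)
  ultimately obtain s where s: "0 \<le> s" "s \<le> 1" "snd (g s) = y"
    using IVT'[of "\<lambda>s. snd (g s)" 0 y 1] by auto
  define S where "S = g ` {s..1}"
  have "s \<noteq> 0" using s(3) False assms(3) by (auto simp: pathstart_def)
  have top_notin: "fan_top \<notin> S"
  proof
    assume "fan_top \<in> S"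
    then obtain u where "u \<in> {s..1}" "g u = g 0"
      using assms(3) unfolding S_def pathstart_def by auto
    then have "u = 0" using arcD[OF assms(1)] s by simp
    then show False using \<open>u \<in> {s..1}\<close> s \<open>s \<noteq> 0\<close> by simp
  qed
  have conn: "connected S" unfolding S_def
    by (rule connected_continuous_image[OF continuous_on_subset[OF cont]]) (use s in auto)
  have sub: "S \<subseteq> cantor_fan_model"
    using assms(2) s unfolding S_def path_image_def by auto
  have "g s \<in> S" "q \<in> S"
    using s assms(4) unfolding S_def pathfinish_def by auto
  then have "fan_blade (g s) = fan_blade q"
    using connected_cantor_fan_model_same_blade[OF conn sub top_notin] by blast
  moreover have "g s \<noteq> fan_top" "g s \<in> cantor_fan_model"
    using top_notin sub \<open>g s \<in> S\<close> by auto
  ultimately have "g s = fan_point (fan_blade q) y"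
    using cantor_fan_model_non_top[of "g s"] s(3) by auto
  then show ?thesis using s unfolding path_image_def by force
qed

lemma arc_onto_blade_segment_starts_at_end:
  assumes "arc g" "path_image g = fan_point c ` {0..h}" "pathstart g = fan_point c y"
    and "0 < y" "y < h"
  shows False
proof -
  have cont: "continuous_on {0..1} g" using arc_imp_path[OF assms(1)] unfolding path_def .
  define S where "S = g ` {0<..1}"
  have "connected S" unfolding S_def
    by (rule connected_continuous_image) (auto intro: continuous_on_subset[OF cont])
  have in_S: "a \<in> S" if "a \<in> fan_point c ` {0..h}" "snd a \<noteq> y" for a
  proof -
    have "a \<in> g ` {0..1}" using that(1) assms(2) by (simp add: path_image_def)
    then obtain u where "u \<in> {0..1}" "a = g u" by blast
    moreover have "u \<noteq> 0" using calculation that(2) assms(3) by (auto simp: pathstart_def)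
    ultimately show ?thesis unfolding S_def by auto
  qed
  have "fan_top \<in> S" "fan_point c h \<in> S"
    using assms(4,5) by (auto intro!: in_S image_eqI[of fan_top _ 0])
  then obtain a where "a \<in> S" "snd a = y"
    using connected_ivt_component[OF \<open>connected S\<close>, of fan_top "fan_point c h" "(0,1)" y]
      assms(4,5) by (auto simp: inner_prod_def)
  then obtain u where u: "u \<in> {0<..1}" "a = g u" "snd (g u) = y" unfolding S_def by auto
  then have "g u \<in> fan_point c ` {0..h}"
    using assms(2) unfolding path_image_def by auto
  then have "g u = g 0" using u(3) assms(3) by (auto simp: pathstart_def)
  then show False using arcD[OF assms(1)] u(1) by force
qed

section \<open>Arcs, end points and ramification points under embeddings\<close>

lemma arc_continuous_inj_image:
  assumes "arc g" "path_image g \<subseteq> S" "continuous_on S f" "inj_on f S"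
  shows "arc (f \<circ> g)"
proof -
  have "path (f \<circ> g)"
    using assms by (intro path_continuous_image) (auto simp: arc_imp_path intro: continuous_on_subset)
  moreover have "inj_on (f \<circ> g) {0..1}"
  proof (rule comp_inj_on)
    show "inj_on g {0..1}" using assms(1) by (rule arc_imp_inj_on)
    show "inj_on f (g ` {0..1})"
      using inj_on_subset[OF assms(4)] assms(2) by (auto simp: path_image_def)
  qed
  ultimately show ?thesis unfolding arc_def by simp
qed

lemma arc_from_to_inj_image:
  assumes "arc_from_to A a b" "A \<subseteq> S" "continuous_on S f" "inj_on f S"
  shows "arc_from_to (f ` A) (f a) (f b)"
proof -
  obtain g where g: "arc g" "path_image g = A" "pathstart g = a" "pathfinish g = b"
    using assms(1) unfolding arc_from_to_def by blast
  then have "arc (f \<circ> g)" using arc_continuous_inj_image assms(2-4) by blast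
  then show ?thesis unfolding arc_from_to_def
    using g by (metis path_image_compose pathfinish_compose pathstart_compose)
qed

lemma arc_endpointE:
  assumes "arc_endpoint A x"
  obtains b where "connected A" "x \<in> A" "b \<in> A" "b \<noteq> x"
proof -
  obtain g b where g: "arc g" "path_image g = A" "pathstart g = x" "pathfinish g = b"
    using assms unfolding arc_endpoint_def arc_from_to_def by blast
  then show ?thesis
    using that connected_arc_image arc_distinct_ends pathstart_in_path_image pathfinish_in_path_image
    by metis
qed

lemma arcwise_connected_imp_connected:
  assumes "arcwise_connected X"
  shows "connected X"
proof -
  have "path_connected X"
    unfolding path_connected_def
  proof (intro ballI)
    fix a b assume "a \<in> X" "b \<in> X"
    show "\<exists>g. path g \<and> path_image g \<subseteq> X \<and> pathstart g = a \<and> pathfinish g = b"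
    proof (cases "a = b")
      case True
      then show ?thesis using \<open>a \<in> X\<close>
        by (intro exI[of _ "\<lambda>_. a"]) (auto simp: path_def path_image_def pathstart_def pathfinish_def)
    next
      case False
      then show ?thesis
        using assms \<open>a \<in> X\<close> \<open>b \<in> X\<close> unfolding arcwise_connected_def arc_from_to_def
        by (metis arc_imp_path)
    qed
  qed
  then show ?thesis by (rule path_connected_imp_connected)
qed

lemma arcwise_connected_inj_image:
  assumes "arcwise_connected X" "continuous_on X f" "inj_on f X"
  shows "arcwise_connected (f ` X)"
  unfolding arcwise_connected_def
proof (intro ballI impI)
  fix a b assume "a \<in> f ` X" "b \<in> f ` X" "a \<noteq> b"
  then obtain a' b' where "a' \<in> X" "b' \<in> X" "a' \<noteq> b'" "a = f a'" "b = f b'" by blast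
  then obtain A where "A \<subseteq> X" "arc_from_to A a' b'"
    using assms(1) unfolding arcwise_connected_def by blast
  then show "\<exists>A. A \<subseteq> f ` X \<and> arc_from_to A a b"
    using arc_from_to_inj_image[OF _ _ assms(2,3)] \<open>a = f a'\<close> \<open>b = f b'\<close> by blast
qed

lemma ramification_point_inj_image:
  assumes "ramification_point X x" "continuous_on X f" "inj_on f X"
  shows "ramification_point (f ` X) (f x)"
proof -
  obtain A1 A2 A3 where A: "A1 \<subseteq> X" "A2 \<subseteq> X" "A3 \<subseteq> X"
    "arc_endpoint A1 x" "arc_endpoint A2 x" "arc_endpoint A3 x"
    "A1 \<inter> A2 = {x}" "A1 \<inter> A3 = {x}" "A2 \<inter> A3 = {x}"
    using assms(1) unfolding ramification_point_def by blast
  have "arc_endpoint (f ` A) (f x)" if "A \<subseteq> X" "arc_endpoint A x" for A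
    using that arc_from_to_inj_image[OF _ _ assms(2,3)] unfolding arc_endpoint_def by blast
  moreover have "f ` A \<inter> f ` B = {f x}" if "A \<subseteq> X" "B \<subseteq> X" "A \<inter> B = {x}" for A B
    using that inj_on_image_Int[OF assms(3)] by (metis image_empty image_insert)
  ultimately show ?thesis
    unfolding ramification_point_def using A by (meson image_mono)
qed

lemma end_points_homeomorphism_image:
  assumes "homeomorphism S T f g"
  shows "f ` end_points S \<subseteq> end_points T"
proof
  fix y assume "y \<in> f ` end_points S"
  then obtain x where x: "x \<in> end_points S" "y = f x" by blast
  have xS: "x \<in> S" using x(1) unfolding end_points_def by blast
  have inj_f: "inj_on f S" and inj_g: "inj_on g T"
    using assms by (metis homeomorphism_apply1 homeomorphism_apply2 inj_on_inverseI)+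
  have cont_f: "continuous_on S f" and cont_g: "continuous_on T g"
    using assms unfolding homeomorphism_def by auto
  have "arc_endpoint A y" if A: "A \<subseteq> T" "is_arc A" "y \<in> A" for A
  proof -
    have gA: "g ` A \<subseteq> S" using A(1) assms homeomorphism_image2 by blast
    obtain a b where "arc_from_to A a b" using A(2) unfolding is_arc_def by blast
    then have "is_arc (g ` A)"
      unfolding is_arc_def using arc_from_to_inj_image[OF _ A(1) cont_g inj_g] by blast
    moreover have "x \<in> g ` A"
      using A(3) x(2) xS assms by (metis homeomorphism_apply1 imageI)
    ultimately obtain b where "arc_from_to (g ` A) x b"
      using x(1) gA unfolding end_points_def arc_endpoint_def by blast
    then have "arc_from_to (f ` g ` A) y (f b)"
      using arc_from_to_inj_image[OF _ gA cont_f inj_f] x(2) by blast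
    moreover have "f ` g ` A = A"
      using A(1) assms by (force simp: image_image homeomorphism_apply2)
    ultimately show ?thesis unfolding arc_endpoint_def by auto
  qed
  moreover have "y \<in> T" using xS x(2) assms homeomorphism_image1 by blast
  ultimately show "y \<in> end_points T" unfolding end_points_def by blast
qed

lemma closure_end_points_homeomorphism_image:
  assumes "homeomorphism S T f g" "closure (end_points S) = S"
  shows "T \<subseteq> closure (end_points T)"
proof -
  have "f ` closure (end_points S) \<subseteq> closure (f ` end_points S)"
    using assms by (intro image_closure_subset) (auto simp: homeomorphism_def closure_subset)
  also have "\<dots> \<subseteq> closure (end_points T)"
    by (intro closure_mono end_points_homeomorphism_image[OF assms(1)])
  finally show ?thesis
    using assms homeomorphism_image1 by metis
qed

section \<open>No simple triod embeds in the real line\<close>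

lemma connected_sets_meet_above:
  fixes f :: "'a::topological_space \<Rightarrow> real"
  assumes "connected A" "connected B" "continuous_on (A \<union> B) f" "inj_on f (A \<union> B)"
    and "x \<in> A" "x \<in> B" "a \<in> A" "b \<in> B" "f x < f a" "f x < f b"
  shows "\<exists>y\<in>A \<inter> B. y \<noteq> x"
proof -
  define t where "t = min (f a) (f b)"
  have "connected (f ` A)" "connected (f ` B)"
    using assms(1-3) by (auto intro: connected_continuous_image continuous_on_subset)
  then have "t \<in> f ` A" "t \<in> f ` B"
    using assms(5-10) connectedD_interval[of _ "f x" _ t] unfolding t_def
    by (metis image_eqI min.cobounded1 min.cobounded2 min_less_iff_conj order_less_imp_le)+
  then obtain ya yb where "ya \<in> A" "yb \<in> B" "f ya = t" "f yb = t" by (metis imageE)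
  moreover from this have "ya = yb" using assms(4) by (auto dest: inj_onD)
  moreover have "t \<noteq> f x" using assms(9,10) unfolding t_def by simp
  ultimately show ?thesis by auto
qed

lemma inj_real_imp_no_ramification_point:
  fixes f :: "'a::metric_space \<Rightarrow> real"
  assumes "continuous_on X f" "inj_on f X"
  shows "\<not> ramification_point X x"
proof
  assume "ramification_point X x"
  then obtain A1 A2 A3 where A: "A1 \<subseteq> X" "A2 \<subseteq> X" "A3 \<subseteq> X"
    "arc_endpoint A1 x" "arc_endpoint A2 x" "arc_endpoint A3 x"
    "A1 \<inter> A2 = {x}" "A1 \<inter> A3 = {x}" "A2 \<inter> A3 = {x}"
    unfolding ramification_point_def by blast
  have same_side: False
    if "A \<subseteq> X" "B \<subseteq> X" "arc_endpoint A x" "arc_endpoint B x" "A \<inter> B = {x}"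
      "a \<in> A" "b \<in> B" "(f a - f x) * (f b - f x) > 0" for A B a b
  proof -
    have conn: "connected A" "connected B" and x: "x \<in> A" "x \<in> B"
      using that(3,4) arc_endpointE by metis+
    have f: "continuous_on (A \<union> B) f" "inj_on f (A \<union> B)"
      using that(1,2) assms by (auto intro: continuous_on_subset inj_on_subset)
    then have minus_f: "continuous_on (A \<union> B) (\<lambda>y. - f y)" "inj_on (\<lambda>y. - f y) (A \<union> B)"
      by (auto intro: continuous_intros simp: inj_on_def)
    have "(f x < f a \<and> f x < f b) \<or> (- f x < - f a \<and> - f x < - f b)"
      using that(8) by (auto simp: zero_less_mult_iff)
    then have "\<exists>y\<in>A \<inter> B. y \<noteq> x"
      using connected_sets_meet_above[OF conn f x that(6,7)]
        connected_sets_meet_above[OF conn minus_f x that(6,7)] by blast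
    then show False using that(5) by blast
  qed
  obtain b1 b2 b3 where "b1 \<in> A1" "b2 \<in> A2" "b3 \<in> A3" "b1 \<noteq> x" "b2 \<noteq> x" "b3 \<noteq> x"
    using A(4-6) arc_endpointE by metis
  moreover have "x \<in> X" using A(1,7) by blast
  ultimately have "f b1 - f x \<noteq> 0" "f b2 - f x \<noteq> 0" "f b3 - f x \<noteq> 0"
    using A(1-3) assms(2) by (auto dest: inj_onD)
  then have "(f b1 - f x) * (f b2 - f x) > 0 \<or> (f b1 - f x) * (f b3 - f x) > 0
      \<or> (f b2 - f x) * (f b3 - f x) > 0"
    by (smt (verit) mult_neg_neg mult_pos_pos)
  then show False
    using same_side[OF A(1,2,4,5,7)] same_side[OF A(1,3,4,6,8)] same_side[OF A(2,3,5,6,9)]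
      \<open>b1 \<in> A1\<close> \<open>b2 \<in> A2\<close> \<open>b3 \<in> A3\<close> by blast
qed

section \<open>Lelek-like subcontinua of the Cantor fan model are not retracts\<close>

lemma fan_top_mem_if_ramification_point:
  assumes "K \<subseteq> cantor_fan_model" "connected K" "ramification_point K x"
  shows "fan_top \<in> K"
proof (rule ccontr)
  assume top_notin: "fan_top \<notin> K"
  have "x \<in> K"
    using assms(3) arc_endpointE unfolding ramification_point_def by blast
  then have same_blade: "fan_blade a = fan_blade x" if "a \<in> K" for a
    using connected_cantor_fan_model_same_blade[OF assms(2,1) top_notin that] by blast
  have "inj_on snd K"
  proof (rule inj_onI)
    fix a a' assume "a \<in> K" "a' \<in> K" "snd a = snd a'"
    then show "a = a'"
      using cantor_fan_model_non_top[of a] cantor_fan_model_non_top[of a'] same_blade assms(1) top_notin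
      by (metis subsetD)
  qed
  moreover have "continuous_on K snd"
    by (intro continuous_intros)
  ultimately show False
    using inj_real_imp_no_ramification_point assms(3) by blast
qed

lemma blade_segment_subset:
  assumes "K \<subseteq> cantor_fan_model" "arcwise_connected K" "fan_top \<in> K"
    and "q \<in> K" "0 \<le> y" "y \<le> snd q"
  shows "fan_point (fan_blade q) y \<in> K"
proof (cases "q = fan_top")
  case True
  then show ?thesis using assms(3,5,6) by simp
next
  case False
  then obtain A where "A \<subseteq> K" "arc_from_to A fan_top q"
    using assms(2-4) unfolding arcwise_connected_def by metis
  then obtain g where "arc g" "path_image g = A" "pathstart g = fan_top" "pathfinish g = q"
    unfolding arc_from_to_def by blast
  then show ?thesis
    using arc_from_fan_top_covers_segment[of g q y] \<open>A \<subseteq> K\<close> assms(1,5,6) by blast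
qed

text \<open>Otherwise the blade segment up to q is an arc in K having e in its interior.\<close>

lemma end_point_highest_on_blade:
  assumes "K \<subseteq> cantor_fan_model" "arcwise_connected K" "fan_top \<in> K"
    and "e \<in> end_points K" "e \<noteq> fan_top" "q \<in> K" "fan_blade q = fan_blade e"
  shows "snd q \<le> snd e"
proof (rule ccontr)
  assume "\<not> snd q \<le> snd e"
  define c where "c = fan_blade e"
  have "e \<in> K" using assms(4) unfolding end_points_def by blast
  then have e: "0 < snd e" "e = fan_point c (snd e)"
    using assms(1,5) cantor_fan_model_non_top unfolding c_def by blast+
  with \<open>\<not> snd q \<le> snd e\<close> have "0 < snd q" "snd e < snd q" by auto
  define Sg where "Sg = fan_point c ` {0..snd q}"
  have "q \<noteq> fan_top" using \<open>0 < snd q\<close> by auto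
  then have q: "q = fan_point c (snd q)"
    using assms(1,6,7) cantor_fan_model_non_top[of q] unfolding c_def by (metis subsetD)
  then have "arc_from_to Sg fan_top q"
    unfolding arc_from_to_def Sg_def
    using arc_linepath[of fan_top q] closed_segment_fan_top[OF \<open>0 < snd q\<close>, of c] \<open>0 < snd q\<close>
    by (metis fan_point_eq_top_iff less_irrefl pathfinish_linepath pathstart_linepath
        path_image_linepath)
  moreover have "Sg \<subseteq> K"
    unfolding Sg_def using blade_segment_subset[OF assms(1-3,6)] assms(7) c_def by auto
  moreover have "e \<in> Sg"
    unfolding Sg_def using e \<open>snd e < snd q\<close> by (auto intro: image_eqI[of e _ "snd e"])
  ultimately have "arc_endpoint Sg e"
    using assms(4) unfolding end_points_def is_arc_def by blast
  then obtain g b where "arc g" "path_image g = Sg" "pathstart g = fan_point c (snd e)"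
    unfolding arc_endpoint_def arc_from_to_def using e(2) by metis
  then show False
    using arc_onto_blade_segment_starts_at_end e(1) \<open>snd e < snd q\<close> unfolding Sg_def by blast
qed

lemma retraction_hits_fan_top_above:
  assumes ret: "retraction cantor_fan_model K \<rho>"
    and "e \<in> K" "e \<noteq> fan_top"
    and highest: "\<And>q. q \<in> K \<Longrightarrow> fan_blade q = fan_blade e \<Longrightarrow> snd q \<le> snd e"
    and "snd e \<le> t" "t \<le> 1" "snd e < snd (\<rho> (fan_point (fan_blade e) t))"
  shows "\<exists>y\<in>{snd e..t}. \<rho> (fan_point (fan_blade e) y) = fan_top"
proof (rule ccontr)
  assume no_hit: "\<not> ?thesis"
  define c where "c = fan_blade e"
  define S where "S = fan_point c ` {snd e..t}"
  have KM: "K \<subseteq> cantor_fan_model" and cont: "continuous_on cantor_fan_model \<rho>"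
    and into: "\<rho> \<in> cantor_fan_model \<rightarrow> K" and id_on_K: "\<And>x. x \<in> K \<Longrightarrow> \<rho> x = x"
    using ret unfolding retraction_def by auto
  have e: "0 < snd e" "c \<in> cantor_set" "e = fan_point c (snd e)"
    using assms(2,3) KM cantor_fan_model_non_top unfolding c_def by blast+
  have SM: "S \<subseteq> cantor_fan_model"
    unfolding S_def using e assms(6) by (auto intro!: fan_point_in_cantor_fan_model)
  have t_in_S: "fan_point c t \<in> S" unfolding S_def using assms(5) by auto
  have "connected S"
    unfolding S_def by (intro connected_continuous_image continuous_intros) auto
  then have "connected (\<rho> ` S)"
    using connected_continuous_image continuous_on_subset[OF cont SM] by blast
  moreover have "\<rho> ` S \<subseteq> cantor_fan_model" using SM into KM by blast
  moreover have "fan_top \<notin> \<rho> ` S" using no_hit unfolding S_def c_def by auto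
  moreover have "\<rho> (fan_point c t) \<in> \<rho> ` S" using t_in_S by blast
  moreover have "e \<in> \<rho> ` S"
    using id_on_K[OF assms(2)] e assms(5) unfolding S_def
    by (metis atLeastAtMost_iff image_eqI order_refl)
  ultimately have "fan_blade (\<rho> (fan_point c t)) = fan_blade e"
    by (rule connected_cantor_fan_model_same_blade)
  moreover have "\<rho> (fan_point c t) \<in> K" using into SM t_in_S by blast
  ultimately show False using highest assms(7) unfolding c_def by fastforce
qed

lemma retraction_fan_top_fibre_avoids_segment:
  assumes ret: "retraction cantor_fan_model K \<rho>"
    and seg: "fan_point c ` {a..t} \<subseteq> K" and "0 < a" "a \<le> t"
    and "b \<longlonglongrightarrow> c"
    and hits: "\<forall>\<^sub>F n in sequentially.
      b n \<in> cantor_set \<and> (\<exists>y\<in>{a..t}. \<rho> (fan_point (b n) y) = fan_top)"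
  shows False
proof -
  define S where "S = fan_point c ` {a..t}"
  have KM: "K \<subseteq> cantor_fan_model" and cont: "continuous_on cantor_fan_model \<rho>"
    and id_on_K: "\<And>x. x \<in> K \<Longrightarrow> \<rho> x = x"
    using ret unfolding retraction_def by auto
  obtain T where T: "closed T" "{x \<in> cantor_fan_model. \<rho> x = fan_top} = cantor_fan_model \<inter> T"
    using continuous_closedin_preimage_constant[OF cont, of fan_top] unfolding closedin_closed by blast
  have "fan_point c t \<in> K" using seg assms(4) by auto
  then have "t \<le> 1" using KM cantor_fan_model_height[of "fan_point c t"] by auto
  have in_T: "fan_point (b n) y \<in> T"
    if "b n \<in> cantor_set" "y \<in> {a..t}" "\<rho> (fan_point (b n) y) = fan_top" for n y
    using that T(2) assms(3) \<open>t \<le> 1\<close> fan_point_in_cantor_fan_model[of "b n" y] by auto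
  have near: "setdist S T \<le> dist (b n) c"
    if "b n \<in> cantor_set" "y \<in> {a..t}" "\<rho> (fan_point (b n) y) = fan_top" for n y
  proof -
    have "setdist S T \<le> dist (fan_point c y) (fan_point (b n) y)"
      using that(2) in_T[OF that] unfolding S_def by (intro setdist_le_dist) auto
    also have "\<dots> = \<bar>y\<bar> * dist (b n) c"
      by (simp add: dist_fan_point dist_real_def abs_minus_commute)
    also have "\<dots> \<le> dist (b n) c"
      using that(2) assms(3) \<open>t \<le> 1\<close> by (intro mult_left_le_one_le) auto
    finally show ?thesis .
  qed
  have "setdist S T \<le> 0"
  proof (rule tendsto_le[OF trivial_limit_sequentially])
    show "(\<lambda>n. dist (b n) c) \<longlonglongrightarrow> 0" using assms(5) tendsto_dist_iff by blast
    show "\<forall>\<^sub>F n in sequentially. setdist S T \<le> dist (b n) c"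
      using hits by eventually_elim (use near in blast)
  qed auto
  moreover have "T \<noteq> {}"
    using eventually_happens'[OF trivial_limit_sequentially hits] in_T by blast
  moreover have "compact S"
    unfolding S_def by (intro compact_continuous_image continuous_intros) auto
  ultimately obtain s where "s \<in> S" "s \<in> T"
    using setdist_eq_0_compact_closed[OF _ T(1)] setdist_pos_le[of S T] assms(4)
    unfolding S_def by fastforce
  moreover have "s \<in> K" "snd s \<noteq> 0"
    using \<open>s \<in> S\<close> seg assms(3) unfolding S_def by auto
  ultimately show False
    using T(2) id_on_K KM by (metis (mono_tags, lifting) IntI mem_Collect_eq snd_fan_top subsetD)
qed

lemma end_points_near_blade_segment_hit_fan_top:
  assumes ret: "retraction cantor_fan_model K \<rho>"
    and arcwise: "arcwise_connected K" and top: "fan_top \<in> K"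
    and seg: "fan_point c ` {0..H} \<subseteq> K" and "0 < H"
    and e: "\<And>n. e n \<in> end_points K" "e \<longlonglongrightarrow> fan_point c (H/2)"
  shows "\<forall>\<^sub>F n in sequentially. fan_blade (e n) \<in> cantor_set \<and>
    (\<exists>y\<in>{H/4..3*H/4}. \<rho> (fan_point (fan_blade (e n)) y) = fan_top)"
proof -
  define t where "t = 3 * H / 4"
  have KM: "K \<subseteq> cantor_fan_model" and cont: "continuous_on cantor_fan_model \<rho>"
    and id_on_K: "\<And>x. x \<in> K \<Longrightarrow> \<rho> x = x"
    using ret unfolding retraction_def by auto
  have seg_point: "fan_point c y \<in> K" if "0 \<le> y" "y \<le> H" for y
    using seg that unfolding image_subset_iff by simp
  have H: "0 < H" "H \<le> 1"
    using seg_point[of H] KM cantor_fan_model_height[of "fan_point c H"] \<open>0 < H\<close> by auto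
  have t: "fan_point c t \<in> K" using seg_point H unfolding t_def by auto
  have eK: "e n \<in> K" for n using e(1) unfolding end_points_def by blast
  have blade_lim: "(\<lambda>n. fan_blade (e n)) \<longlonglongrightarrow> c"
    using tendsto_fan_blade[OF e(2)] H by simp
  have height_lim: "(\<lambda>n. snd (e n)) \<longlonglongrightarrow> H/2"
    using tendsto_snd[OF e(2)] by simp
  have ev_low: "\<forall>\<^sub>F n in sequentially. H/4 < snd (e n)"
    and ev_mid: "\<forall>\<^sub>F n in sequentially. snd (e n) < 5*H/8"
    using order_tendstoD(1)[OF height_lim, of "H/4"] order_tendstoD(2)[OF height_lim, of "5*H/8"] H
    by simp_all
  have e_non_top: "e n \<noteq> fan_top" if "H/4 < snd (e n)" for n
    using that H by auto
  have ev_blade: "\<forall>\<^sub>F n in sequentially. fan_blade (e n) \<in> cantor_set"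
    using ev_low by eventually_elim (use e_non_top eK KM cantor_fan_model_non_top in blast)
  have "(\<lambda>n. \<rho> (fan_point (fan_blade (e n)) t)) \<longlonglongrightarrow> \<rho> (fan_point c t)"
  proof (rule continuous_on_tendsto_compose[OF cont])
    show "(\<lambda>n. fan_point (fan_blade (e n)) t) \<longlonglongrightarrow> fan_point c t"
      by (intro tendsto_intros blade_lim)
    show "fan_point c t \<in> cantor_fan_model" using t KM by auto
    show "\<forall>\<^sub>F n in sequentially. fan_point (fan_blade (e n)) t \<in> cantor_fan_model"
      using ev_blade
      by eventually_elim (use H in \<open>auto intro: fan_point_in_cantor_fan_model simp: t_def\<close>)
  qed
  then have "(\<lambda>n. snd (\<rho> (fan_point (fan_blade (e n)) t))) \<longlonglongrightarrow> t"
    using tendsto_snd id_on_K[OF t] by fastforce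
  then have ev_high: "\<forall>\<^sub>F n in sequentially. 5*H/8 < snd (\<rho> (fan_point (fan_blade (e n)) t))"
    by (rule order_tendstoD(1)) (use H in \<open>simp add: t_def\<close>)
  show ?thesis
    using ev_low ev_mid ev_high ev_blade
  proof eventually_elim
    case (elim n)
    have "\<exists>y\<in>{snd (e n)..t}. \<rho> (fan_point (fan_blade (e n)) y) = fan_top"
      by (rule retraction_hits_fan_top_above[OF ret eK e_non_top[OF elim(1)]
          end_point_highest_on_blade[OF KM arcwise top e(1) e_non_top[OF elim(1)]]])
        (use elim H in \<open>auto simp: t_def\<close>)
    then obtain y where "y \<in> {snd (e n)..t}" "\<rho> (fan_point (fan_blade (e n)) y) = fan_top" ..
    then show ?case using elim(1,4) unfolding t_def by (intro conjI bexI[of _ y]) auto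
  qed
qed

lemma cantor_fan_model_no_retraction:
  assumes KM: "K \<subseteq> cantor_fan_model" and arcwise: "arcwise_connected K"
    and ram: "ramification_point K x" and dense: "K \<subseteq> closure (end_points K)"
  shows "\<not> retraction cantor_fan_model K \<rho>"
proof
  assume ret: "retraction cantor_fan_model K \<rho>"
  have top: "fan_top \<in> K"
    using fan_top_mem_if_ramification_point[OF KM arcwise_connected_imp_connected[OF arcwise] ram] .
  obtain p where p: "p \<in> K" "p \<noteq> fan_top"
  proof -
    obtain A b where "A \<subseteq> K" "x \<in> A" "b \<in> A" "b \<noteq> x"
      using ram arc_endpointE unfolding ramification_point_def by metis
    then show ?thesis using that by blast
  qed
  define H c where "H = snd p" and "c = fan_blade p"
  have "0 < H"
    using cantor_fan_model_non_top[of p] p KM unfolding H_def by auto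
  have seg: "fan_point c ` {0..H} \<subseteq> K"
    using blade_segment_subset[OF KM arcwise top p(1)] unfolding H_def c_def by auto
  then have "fan_point c (H/2) \<in> closure (end_points K)"
    using \<open>0 < H\<close> dense unfolding image_subset_iff by auto
  then obtain e where e: "\<And>n. e n \<in> end_points K" "e \<longlonglongrightarrow> fan_point c (H/2)"
    unfolding closure_sequential by blast
  have "(\<lambda>n. fan_blade (e n)) \<longlonglongrightarrow> c"
    using tendsto_fan_blade[OF e(2)] \<open>0 < H\<close> by simp
  moreover have "fan_point c ` {H/4..3*H/4} \<subseteq> K"
    using seg \<open>0 < H\<close> by auto
  ultimately show False
    using retraction_fan_top_fibre_avoids_segment[OF ret _ _ _ _
        end_points_near_blade_segment_hit_fan_top[OF ret arcwise top seg \<open>0 < H\<close> e]] \<open>0 < H\<close>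
    by simp
qed

section \<open>Transfer to an arbitrary Cantor fan\<close>

lemma retraction_homeomorphism_image:
  assumes hom: "homeomorphism S T f g" and ret: "retraction S K r"
  shows "retraction T (f ` K) (f \<circ> r \<circ> g)"
proof -
  have K: "K \<subseteq> S" "continuous_on S r" "r \<in> S \<rightarrow> K" "\<And>x. x \<in> K \<Longrightarrow> r x = x"
    using ret unfolding retraction_def by auto
  have f: "continuous_on S f" and g: "continuous_on T g" "g ` T = S"
    and fT: "f ` S = T" and gf: "\<And>x. x \<in> S \<Longrightarrow> g (f x) = x"
    using hom unfolding homeomorphism_def by auto
  show ?thesis
    unfolding retraction_def
  proof (intro conjI)
    show "f ` K \<subseteq> T" using K(1) fT by blast
    show "continuous_on T (f \<circ> r \<circ> g)"
      using K(1,3) g by (intro continuous_on_compose continuous_on_subset[OF f]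
          continuous_on_subset[OF K(2)]) auto
    show "f \<circ> r \<circ> g \<in> T \<rightarrow> f ` K" using K(3) g(2) by (auto simp: Pi_iff)
    show "\<forall>y\<in>f ` K. (f \<circ> r \<circ> g) y = y" using K(1,4) gf by auto
  qed
qed

lemma lelek_fanD:
  assumes "lelek_fan X"
  obtains x where "compact X" "X \<noteq> {}" "arcwise_connected X" "ramification_point X x"
    "closure (end_points X) = X"
  using assms
  unfolding lelek_fan_def lelek_fan_with_top_def smooth_fan_with_top_def fan_with_top_def
    dendroid_def continuum_def
  by blast

lemma lelek_fan_not_retract_of_cantor_fan:
  assumes "cantor_fan C" "lelek_fan K" "K \<subseteq> C"
  shows "\<not> retraction C K r"
proof
  assume ret: "retraction C K r"
  obtain f g where hom: "homeomorphism C cantor_fan_model f g"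
    using assms(1) unfolding cantor_fan_def homeomorphic_def by blast
  obtain x where K: "arcwise_connected K" "ramification_point K x" "closure (end_points K) = K"
    using lelek_fanD[OF assms(2)] by metis
  have hom_K: "homeomorphism K (f ` K) f g"
    using homeomorphism_of_subsets[OF hom assms(3) subset_refl refl] .
  then have "continuous_on K f" "inj_on f K"
    unfolding homeomorphism_def by (auto intro: inj_on_inverseI)
  then have "arcwise_connected (f ` K)" "ramification_point (f ` K) (f x)"
    using arcwise_connected_inj_image ramification_point_inj_image K by blast+
  moreover have "f ` K \<subseteq> cantor_fan_model"
    using hom assms(3) homeomorphism_image1 by blast
  moreover have "f ` K \<subseteq> closure (end_points (f ` K))"
    by (rule closure_end_points_homeomorphism_image[OF hom_K K(3)])
  moreover have "retraction cantor_fan_model (f ` K) (f \<circ> r \<circ> g)"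
    by (rule retraction_homeomorphism_image[OF hom ret])
  ultimately show False
    using cantor_fan_model_no_retraction by blast
qed

section \<open>Reduction to the wedge\<close>

lemma retraction_onto_closed_piece:
  fixes A B :: "'a::topological_space set"
  assumes "closed A" "closed B" "A \<inter> B \<subseteq> {a}" "a \<in> A"
  shows "retraction (A \<union> B) A (\<lambda>x. if x \<in> A then x else a)"
  unfolding retraction_def
proof (intro conjI)
  show "continuous_on (A \<union> B) (\<lambda>x. if x \<in> A then x else a)"
  proof (rule continuous_on_closed_Un[OF assms(1,2)])
    show "continuous_on A (\<lambda>x. if x \<in> A then x else a)"
      by (rule continuous_on_eq[OF continuous_on_id]) auto
    show "continuous_on B (\<lambda>x. if x \<in> A then x else a)"
      by (rule continuous_on_eq[OF continuous_on_const[of _ a]]) (use assms(3) in auto)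
  qed
qed (use assms(4) in auto)

theorem mainTheorem9:
  fixes L L' W C :: "'a::metric_space set" and v :: 'a
  assumes "lelek_fan_with_top L v"
    and "wedge L v W"
    and "L' \<subseteq> L" and "lelek_fan L'"
    and "lelek_fan (L' \<inter> W)"
    and "cantor_fan C" and "L' \<inter> W \<subseteq> C" and "C \<subseteq> W"
  shows "\<not> (\<exists>r. retraction L L' r)"
proof
  assume "\<exists>r. retraction L L' r"
  then obtain r where r: "retraction L L' r" by blast
  define A B where "A = L' \<inter> W" and "B = L' \<inter> ((L - W) \<union> {v})"
  have "compact L'" "compact W" "compact ((L - W) \<union> {v})" "W \<subseteq> L"
    using assms(2,4) lelek_fanD unfolding wedge_def by metis+
  then have closed: "closed A" "closed B"
    unfolding A_def B_def by (auto intro: closed_Int compact_imp_closed)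
  obtain a where a: "A \<inter> B \<subseteq> {a}" "a \<in> A"
  proof (cases "v \<in> A")
    case True
    then show ?thesis using that unfolding A_def B_def by blast
  next
    case False
    obtain a where "a \<in> A" using lelek_fanD[OF assms(5)] unfolding A_def by blast
    then show ?thesis using that False unfolding A_def B_def by blast
  qed
  have "L' = A \<union> B" using assms(3) unfolding A_def B_def by blast
  then have "retraction L A ((\<lambda>x. if x \<in> A then x else a) \<circ> r)"
    using retraction_comp[OF r] retraction_onto_closed_piece[OF closed a] by simp
  then have "retraction C A ((\<lambda>x. if x \<in> A then x else a) \<circ> r)"
    using retraction_subset assms(7,8) \<open>W \<subseteq> L\<close> unfolding A_def by blast
  then show False
    using lelek_fan_not_retract_of_cantor_fan[OF assms(6,5,7)] unfolding A_def by blast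
qed

end
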